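(* Let $M$ be an $n\times n$ positive semidefinite matrix of rank $d$, and write $M=V^TV$ with $V\in\mathbb{R}^{d\times n}$ having columns $v_1,\dots,v_n$. Let $\alpha\ge 0$ and let $c=(c_1,\dots,c_n)$ be an $\alpha$-optimal solution of the program \[ \text{maximize } \ln\det\Big(\sum_{i=1}^n c_iv_iv_i^T\Big)\quad\text{s.t. } \sum_{i=1}^n c_i=d,\ c_i\ge 0\ \ \forall i. \] Let $S$ be a random multiset of $d$ elements of $[n]$, each sampled independently with replacement with $\Pr[\text{element}=\ell]=c_\ell/d$. Then \[ \mathbb{E}\,\det(M_{S,S})\ \ge\ \frac{d!}{d^d}\,e^{-\alpha}\,\mathrm{msd}_d(M), \] and $\frac{d!}{d^d}\sim\sqrt{2\pi d}\,e^{-d}$.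
   Context: For a multiset $S$ of indices, $M_{S,S}$ is the submatrix of $M$ with rows and columns indexed by $S$, repeated according to multiplicity. $\mathrm{msd}_j(M)\coloneqq\max\{\det(M_{T,T}): T\subseteq[n],\ |T|=j\}$. A feasible solution $c$ of a maximization problem with optimal value $v^*$ is $\alpha$-optimal if its objective value is at least $v^*-\alpha$ (with $\ln\det$ of a singular matrix taken to be $-\infty$). *)

theory Defs
  imports "HOL-Analysis.Analysis" "HOL-Library.Landau_Symbols"
    "Jordan_Normal_Form.DL_Rank_Submatrix"
begin

definition psd_mat :: "real mat \<Rightarrow> bool" where
  "psd_mat M \<longleftrightarrow> (\<exists>n. M \<in> carrier_mat n n \<and> M\<^sup>T = M \<and>
      (\<forall>x \<in> carrier_vec n. x \<bullet> (M *\<^sub>v x) \<ge> 0))"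

text \<open>Principal submatrix indexed by a sequence s of length k (a multiset of indices,
  listed with multiplicity); its determinant does not depend on the listing order.\<close>
definition seq_submat :: "'a mat \<Rightarrow> nat \<Rightarrow> (nat \<Rightarrow> nat) \<Rightarrow> 'a mat" where
  "seq_submat M k s = mat k k (\<lambda>(i,j). M $$ (s i, s j))"

definition msd :: "nat \<Rightarrow> real mat \<Rightarrow> real" where
  "msd j M = Max {det (submatrix M T T) | T. T \<subseteq> {0..<dim_row M} \<and> card T = j}"

definition weighted_gram :: "real mat \<Rightarrow> (nat \<Rightarrow> real) \<Rightarrow> real mat" where
  "weighted_gram V c = mat (dim_row V) (dim_row V)
     (\<lambda>(a,b). \<Sum>i<dim_col V. c i * (col V i $ a) * (col V i $ b))"

definition ln_det :: "real mat \<Rightarrow> ereal" where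
  "ln_det A = (if det A > 0 then ereal (ln (det A)) else -\<infinity>)"

definition feasible :: "nat \<Rightarrow> nat \<Rightarrow> (nat \<Rightarrow> real) \<Rightarrow> bool" where
  "feasible n d c \<longleftrightarrow> (\<forall>i<n. c i \<ge> 0) \<and> (\<Sum>i<n. c i) = real d"

definition alpha_optimal :: "real mat \<Rightarrow> real \<Rightarrow> (nat \<Rightarrow> real) \<Rightarrow> bool" where
  "alpha_optimal V \<alpha> c \<longleftrightarrow> feasible (dim_col V) (dim_row V) c \<and>
     ln_det (weighted_gram V c) \<ge>
       (SUP c'\<in>{c'. feasible (dim_col V) (dim_row V) c'}. ln_det (weighted_gram V c')) - ereal \<alpha>"

text \<open>Expectation of det(M_{S,S}) where S consists of d i.i.d. samples from [n]
  with Pr[l] = c l / d.\<close>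
definition expected_det :: "real mat \<Rightarrow> nat \<Rightarrow> (nat \<Rightarrow> real) \<Rightarrow> real" where
  "expected_det M d c = (\<Sum>s\<in>PiE {0..<d} (\<lambda>_. {0..<dim_row M}).
      (\<Prod>k<d. c (s k) / real d) * det (seq_submat M d s))"

end

theory Submission
  imports Defs
begin

text \<open>
  Write \<open>U\<^sub>s\<close> for the \<open>d \<times> d\<close> matrix formed by the columns \<open>v\<^bsub>s 0\<^esub>, \<dots>, v\<^bsub>s (d-1)\<^esub>\<close>
  of \<open>V\<close>. Then \<open>det (M\<^bsub>S,S\<^esub>) = det (U\<^sub>s)\<^sup>2\<close>, and expanding \<open>det (\<Sum>\<^sub>i c\<^sub>i v\<^sub>i v\<^sub>i\<^sup>T)\<close> by
  multilinearity and symmetrising over the \<open>d!\<close> reorderings of \<open>s\<close> gives the Cauchy--Binet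
  identity with repetitions \<open>d! det (\<Sum>\<^sub>i c\<^sub>i v\<^sub>i v\<^sub>i\<^sup>T) = \<Sum>\<^sub>s (\<Prod>\<^sub>k c\<^bsub>s k\<^esub>) det (U\<^sub>s)\<^sup>2\<close>.
  Hence the expectation equals \<open>d!/d\<^sup>d\<close> times the optimal-design determinant. The indicator
  of a maximising \<open>d\<close>-set \<open>T\<close> is feasible with determinant \<open>det (M\<^bsub>T,T\<^esub>)\<close>, so
  \<open>\<alpha>\<close>-optimality bounds that determinant below by \<open>e\<^sup>-\<^sup>\<alpha> msd\<^sub>d(M)\<close>.

  For Stirling's formula, \<open>y\<^sub>n = n! e\<^sup>n / (n\<^sup>n \<surd>n)\<close> has logarithmic increments of order
  \<open>1/n\<^sup>2\<close>, so it converges to some \<open>A > 0\<close>; the Gauss product for \<open>\<Gamma>(1/2) = \<surd>\<pi>\<close> is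
  an explicit expression in \<open>y\<^sub>n\<^sup>2 / y\<^bsub>2n\<^esub>\<close>, which forces \<open>A = \<surd>(2\<pi>)\<close>.
\<close>

section \<open>Cauchy--Binet for weighted Gram matrices\<close>

definition columns_mat :: "'a mat \<Rightarrow> nat \<Rightarrow> (nat \<Rightarrow> nat) \<Rightarrow> 'a mat" where
  "columns_mat V d s = mat d d (\<lambda>(k, a). V $$ (a, s k))"

lemma columns_mat_carrier [simp]: "columns_mat V d s \<in> carrier_mat d d"
  by (simp add: columns_mat_def)

lemma columns_mat_dims [simp]: "dim_row (columns_mat V d s) = d" "dim_col (columns_mat V d s) = d"
  by (simp_all add: columns_mat_def)

lemma weighted_gram_carrier: "V \<in> carrier_mat d n \<Longrightarrow> weighted_gram V c \<in> carrier_mat d d"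
  by (simp add: weighted_gram_def)

lemma weighted_gram_index:
  assumes "V \<in> carrier_mat d n" "a < d" "b < d"
  shows "weighted_gram V c $$ (a, b) = (\<Sum>i\<in>{0..<n}. c i * V $$ (a, i) * V $$ (b, i))"
  using assms by (auto simp: weighted_gram_def lessThan_atLeast0 intro!: sum.cong)

lemma det_columns_mat_sum_permutes:
  "det (columns_mat V d s) = (\<Sum>p | p permutes {0..<d}. signof p * (\<Prod>a\<in>{0..<d}. V $$ (a, s (p a))))"
proof -
  have "det (columns_mat V d s) = det (transpose_mat (columns_mat V d s))"
    by (rule det_transpose[OF columns_mat_carrier, symmetric])
  also have "\<dots> = (\<Sum>p | p permutes {0..<d}. signof p * (\<Prod>a\<in>{0..<d}. V $$ (a, s (p a))))"
    unfolding det_def'[OF transpose_carrier_mat[THEN iffD2, OF columns_mat_carrier]]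
    by (intro sum.cong refl arg_cong2[where f = "(*)"] prod.cong)
      (auto simp: columns_mat_def permutes_in_image)
  finally show ?thesis .
qed

lemma det_weighted_gram_expand:
  assumes V: "V \<in> carrier_mat d n"
  shows "det (weighted_gram V c) =
    (\<Sum>s\<in>PiE {0..<d} (\<lambda>_. {0..<n}). (\<Prod>a\<in>{0..<d}. c (s a) * V $$ (a, s a)) * det (columns_mat V d s))"
proof -
  let ?P = "{p. p permutes {0..<d}}"
  let ?S = "PiE {0..<d} (\<lambda>_. {0..<n})"
  have "det (weighted_gram V c) =
      (\<Sum>p\<in>?P. signof p * (\<Prod>a\<in>{0..<d}. \<Sum>i\<in>{0..<n}. c i * V $$ (a, i) * V $$ (p a, i)))"
    unfolding det_def'[OF weighted_gram_carrier[OF V]]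
    by (intro sum.cong refl arg_cong2[where f = "(*)"] prod.cong)
      (auto simp: weighted_gram_index[OF V] permutes_in_image)
  also have "\<dots> = (\<Sum>p\<in>?P. \<Sum>s\<in>?S.
      (\<Prod>a\<in>{0..<d}. c (s a) * V $$ (a, s a)) * (signof p * (\<Prod>a\<in>{0..<d}. V $$ (p a, s a))))"
    by (subst prod_sum_PiE) (auto simp: sum_distrib_left prod.distrib mult_ac)
  also have "\<dots> = (\<Sum>s\<in>?S. (\<Prod>a\<in>{0..<d}. c (s a) * V $$ (a, s a)) *
      (\<Sum>p\<in>?P. signof p * (\<Prod>a\<in>{0..<d}. V $$ (p a, s a))))"
    by (subst sum.swap) (simp add: sum_distrib_left)
  also have "\<dots> = (\<Sum>s\<in>?S. (\<Prod>a\<in>{0..<d}. c (s a) * V $$ (a, s a)) * det (columns_mat V d s))"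
    unfolding det_def'[OF columns_mat_carrier]
    by (intro sum.cong refl arg_cong2[where f = "(*)"] prod.cong)
      (auto simp: columns_mat_def permutes_in_image)
  finally show ?thesis .
qed

lemma PiE_comp_permutes:
  assumes "\<sigma> permutes {0..<d}" "s \<in> PiE {0..<d} (\<lambda>_. B)"
  shows "s \<circ> \<sigma> \<in> PiE {0..<d} (\<lambda>_. B)"
  using assms permutes_in_image[OF assms(1)] permutes_not_in[OF assms(1)]
  by (auto simp: PiE_iff extensional_def)

lemma det_columns_mat_comp_permutes:
  assumes "\<sigma> permutes {0..<d}"
  shows "det (columns_mat V d (s \<circ> \<sigma>)) = signof \<sigma> * det (columns_mat V d s)"
proof -
  have "columns_mat V d (s \<circ> \<sigma>) = mat d d (\<lambda>(i, j). columns_mat V d s $$ (\<sigma> i, j))"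
    using assms by (intro eq_matI) (auto simp: columns_mat_def permutes_in_image)
  thus ?thesis using det_permute_rows[OF columns_mat_carrier assms] by simp
qed

text \<open>Reindexing the expansion by \<open>s \<mapsto> s \<circ> \<sigma>\<close> moves the permutation \<open>\<sigma>\<close> onto the
  row indices of the factor \<open>V $$ (a, s a)\<close>.\<close>
lemma det_weighted_gram_expand_permutes:
  assumes V: "V \<in> carrier_mat d n" and \<sigma>: "\<sigma> permutes {0..<d}"
  shows "det (weighted_gram V c) =
    (\<Sum>s\<in>PiE {0..<d} (\<lambda>_. {0..<n}). (\<Prod>a\<in>{0..<d}. c (s a)) * det (columns_mat V d s) *
        (signof \<sigma> * (\<Prod>a\<in>{0..<d}. V $$ (a, s (\<sigma> a)))))"
proof -
  let ?S = "PiE {0..<d} (\<lambda>_. {0..<n})"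
  define F where "F s = (\<Prod>a\<in>{0..<d}. c (s a) * V $$ (a, s a)) * det (columns_mat V d s)" for s
  have inv_\<sigma>: "Hilbert_Choice.inv \<sigma> permutes {0..<d}"
    using permutes_inv[OF \<sigma>] .
  have inverses: "\<sigma> (Hilbert_Choice.inv \<sigma> x) = x" "Hilbert_Choice.inv \<sigma> (\<sigma> x) = x" for x
    using permutes_inverses[OF \<sigma>] by auto
  have "(\<Sum>s\<in>?S. F (s \<circ> \<sigma>)) = (\<Sum>s\<in>?S. F s)"
  proof (rule sum.reindex_bij_witness[of _ "\<lambda>s. s \<circ> Hilbert_Choice.inv \<sigma>" "\<lambda>s. s \<circ> \<sigma>"])
    fix s assume "s \<in> ?S"
    thus "s \<circ> \<sigma> \<circ> Hilbert_Choice.inv \<sigma> = s" "s \<circ> \<sigma> \<in> ?S"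
      using PiE_comp_permutes[OF \<sigma>] by (auto simp: o_def inverses)
  next
    fix s assume "s \<in> ?S"
    thus "s \<circ> Hilbert_Choice.inv \<sigma> \<circ> \<sigma> = s" "s \<circ> Hilbert_Choice.inv \<sigma> \<in> ?S"
      using PiE_comp_permutes[OF inv_\<sigma>] by (auto simp: o_def inverses)
  qed simp
  moreover have "F (s \<circ> \<sigma>) = (\<Prod>a\<in>{0..<d}. c (s a)) * det (columns_mat V d s) *
      (signof \<sigma> * (\<Prod>a\<in>{0..<d}. V $$ (a, s (\<sigma> a))))" for s
    using prod.permute[OF \<sigma>, of "\<lambda>a. c (s a)"]
    unfolding F_def det_columns_mat_comp_permutes[OF \<sigma>] prod.distrib by (simp add: o_def mult_ac)
  moreover have "det (weighted_gram V c) = (\<Sum>s\<in>?S. F s)"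
    unfolding F_def by (rule det_weighted_gram_expand[OF V])
  ultimately show ?thesis
    by simp
qed

text \<open>Cauchy--Binet with repeated indices: summing the previous identity over all \<open>\<sigma>\<close> turns
  its last factor into \<open>det (columns_mat V d s)\<close>.\<close>
lemma fact_mult_det_weighted_gram:
  assumes V: "V \<in> carrier_mat d n"
  shows "fact d * det (weighted_gram V c) =
    (\<Sum>s\<in>PiE {0..<d} (\<lambda>_. {0..<n}). (\<Prod>a\<in>{0..<d}. c (s a)) * det (columns_mat V d s) ^ 2)"
proof -
  let ?S = "PiE {0..<d} (\<lambda>_. {0..<n})"
  let ?P = "{p. p permutes {0..<d}}"
  have "fact d * det (weighted_gram V c) = (\<Sum>\<sigma>\<in>?P. det (weighted_gram V c))"
    by (simp add: card_permutations)
  also have "\<dots> = (\<Sum>s\<in>?S. (\<Prod>a\<in>{0..<d}. c (s a)) * det (columns_mat V d s) *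
      (\<Sum>\<sigma>\<in>?P. signof \<sigma> * (\<Prod>a\<in>{0..<d}. V $$ (a, s (\<sigma> a)))))"
    by (subst sum.cong[OF refl det_weighted_gram_expand_permutes[OF V]], simp)
      (subst sum.swap, simp add: sum_distrib_left)
  finally show ?thesis
    by (simp add: det_columns_mat_sum_permutes[symmetric] power2_eq_square mult.assoc)
qed

lemma det_weighted_gram_nonneg:
  assumes V: "V \<in> carrier_mat d n" and c: "\<And>i. i < n \<Longrightarrow> c i \<ge> 0"
  shows "det (weighted_gram V c) \<ge> 0"
proof -
  have "fact d * det (weighted_gram V c) \<ge> 0"
    unfolding fact_mult_det_weighted_gram[OF V] using c
    by (intro sum_nonneg mult_nonneg_nonneg prod_nonneg) (auto simp: PiE_iff)
  thus ?thesis
    using fact_gt_zero[of d, where 'a = real] by (simp add: zero_le_mult_iff)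
qed

section \<open>The expected subdeterminant\<close>

lemma det_mult_transpose_self:
  "A \<in> carrier_mat n n \<Longrightarrow> det (A * A\<^sup>T) = det A ^ 2"
  by (simp add: det_mult[of A n] det_transpose power2_eq_square)

lemma det_transpose_mult_self:
  "A \<in> carrier_mat n n \<Longrightarrow> det (A\<^sup>T * A) = det A ^ 2"
  by (simp add: det_mult[of "A\<^sup>T" n] det_transpose power2_eq_square)

lemma seq_submat_gram:
  assumes V: "V \<in> carrier_mat d n" and s: "\<And>k. k < d \<Longrightarrow> s k < n"
  shows "seq_submat (V\<^sup>T * V) d s = columns_mat V d s * (columns_mat V d s)\<^sup>T"
  using V s by (intro eq_matI) (auto simp: seq_submat_def columns_mat_def scalar_prod_def)

lemma det_seq_submat_gram:
  assumes V: "V \<in> carrier_mat d n" and s: "\<And>k. k < d \<Longrightarrow> s k < n"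
  shows "det (seq_submat (V\<^sup>T * V) d s) = det (columns_mat V d s) ^ 2"
  by (simp add: seq_submat_gram[OF V s] det_mult_transpose_self[OF columns_mat_carrier])

lemma expected_det_gram:
  assumes V: "V \<in> carrier_mat d n"
  shows "expected_det (V\<^sup>T * V) d c = fact d / real d ^ d * det (weighted_gram V c)"
proof -
  have "expected_det (V\<^sup>T * V) d c = (\<Sum>s\<in>PiE {0..<d} (\<lambda>_. {0..<n}).
      (\<Prod>k\<in>{0..<d}. c (s k)) / real d ^ d * det (columns_mat V d s) ^ 2)"
    unfolding expected_det_def using V
    by (intro sum.cong refl arg_cong2[where f = "(*)"])
      (auto simp: lessThan_atLeast0 prod_dividef det_seq_submat_gram[OF V] PiE_iff)
  also have "\<dots> = fact d * det (weighted_gram V c) / real d ^ d"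
    unfolding fact_mult_det_weighted_gram[OF V] by (simp add: sum_divide_distrib)
  finally show ?thesis by simp
qed

lemma bij_betw_pick:
  assumes "finite T" "card T = d"
  shows "bij_betw (pick T) {0..<d} T"
proof -
  have inj: "inj_on (pick T) {0..<d}"
    using assms pick_mono by (intro inj_onI) (metis atLeastLessThan_iff less_irrefl nat_neq_iff)
  moreover have "pick T ` {0..<d} \<subseteq> T"
    using assms pick_in_set by auto
  moreover have "card (pick T ` {0..<d}) = card T"
    using card_image[OF inj] assms by simp
  ultimately show ?thesis
    using card_subset_eq[OF assms(1)] by (simp add: bij_betw_def)
qed

text \<open>The indicator weights of \<open>T\<close> turn the weighted Gram matrix into \<open>U\<^sup>T U\<close> and the
  principal submatrix into \<open>U U\<^sup>T\<close>, for \<open>U\<close> built from the columns indexed by \<open>T\<close>.\<close>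
lemma det_submatrix_gram:
  assumes V: "V \<in> carrier_mat d n" and T: "T \<subseteq> {0..<n}" "card T = d"
  shows "det (submatrix (V\<^sup>T * V) T T) = det (weighted_gram V (\<lambda>i. if i \<in> T then 1 else 0))"
proof -
  let ?U = "columns_mat V d (pick T)"
  have bij: "bij_betw (pick T) {0..<d} T"
    using T finite_subset by (intro bij_betw_pick) auto
  have pick_lt: "pick T k < n" if "k < d" for k
    using bij_betw_apply[OF bij] that T(1) by fastforce
  have "{i. i < n \<and> i \<in> T} = T"
    using T by auto
  hence "submatrix (V\<^sup>T * V) T T = seq_submat (V\<^sup>T * V) d (pick T)"
    using V T(2) by (simp add: submatrix_def seq_submat_def)
  hence "det (submatrix (V\<^sup>T * V) T T) = det ?U ^ 2"
    using det_seq_submat_gram[OF V pick_lt] by simp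
  moreover have "weighted_gram V (\<lambda>i. if i \<in> T then 1 else 0) = ?U\<^sup>T * ?U"
  proof (rule eq_matI)
    fix a b assume "a < dim_row (?U\<^sup>T * ?U)" "b < dim_col (?U\<^sup>T * ?U)"
    hence ab: "a < d" "b < d" by auto
    have "weighted_gram V (\<lambda>i. if i \<in> T then 1 else 0) $$ (a, b) =
        (\<Sum>i\<in>T. V $$ (a, i) * V $$ (b, i))"
      using T(1) by (simp add: weighted_gram_index[OF V ab] if_distrib[of "\<lambda>x. x * _"] sum.If_cases
          inf.absorb2)
    also have "\<dots> = (\<Sum>k\<in>{0..<d}. V $$ (a, pick T k) * V $$ (b, pick T k))"
      by (rule sum.reindex_bij_betw[OF bij, symmetric])
    finally show "weighted_gram V (\<lambda>i. if i \<in> T then 1 else 0) $$ (a, b) = (?U\<^sup>T * ?U) $$ (a, b)"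
      using ab by (simp add: columns_mat_def scalar_prod_def)
  qed (use V in \<open>auto simp: weighted_gram_def\<close>)
  ultimately show ?thesis
    by (simp add: det_transpose_mult_self[OF columns_mat_carrier])
qed

lemma feasible_indicator:
  assumes "T \<subseteq> {0..<n}" "card T = d"
  shows "feasible n d (\<lambda>i. if i \<in> T then 1 else 0)"
  using assms by (simp add: feasible_def sum.If_cases Int_absorb1 lessThan_atLeast0)

lemma msd_attained:
  assumes "M \<in> carrier_mat n n" "d \<le> n"
  obtains T where "T \<subseteq> {0..<n}" "card T = d" "msd d M = det (submatrix M T T)"
proof -
  let ?D = "(\<lambda>T. det (submatrix M T T)) ` {T. T \<subseteq> {0..<n} \<and> card T = d}"
  have "{0..<d} \<in> {T. T \<subseteq> {0..<n} \<and> card T = d}"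
    using assms by auto
  hence "?D \<noteq> {}"
    by blast
  hence "Max ?D \<in> ?D"
    by (intro Max_in) auto
  moreover have "msd d M = Max ?D"
    using assms(1) unfolding msd_def by (intro arg_cong[where f = Max]) auto
  ultimately show ?thesis
    using that by auto
qed

lemma det_weighted_gram_alpha_optimal:
  assumes V: "V \<in> carrier_mat d n" and opt: "alpha_optimal V \<alpha> c"
    and T: "T \<subseteq> {0..<n}" "card T = d"
  shows "exp (-\<alpha>) * det (submatrix (V\<^sup>T * V) T T) \<le> det (weighted_gram V c)"
proof (cases "det (submatrix (V\<^sup>T * V) T T) > 0")
  case False
  have "feasible n d c"
    using opt V by (simp add: alpha_optimal_def)
  hence "det (weighted_gram V c) \<ge> 0"
    by (intro det_weighted_gram_nonneg[OF V]) (auto simp: feasible_def)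
  moreover have "exp (-\<alpha>) * det (submatrix (V\<^sup>T * V) T T) \<le> 0"
    using False by (intro mult_nonneg_nonpos) simp_all
  ultimately show ?thesis
    by linarith
next
  case True
  let ?m = "det (submatrix (V\<^sup>T * V) T T)"
  let ?opt = "SUP c'\<in>{c'. feasible (dim_col V) (dim_row V) c'}. ln_det (weighted_gram V c')"
  have "ereal (ln ?m) = ln_det (weighted_gram V (\<lambda>i. if i \<in> T then 1 else 0))"
    using True by (simp add: ln_det_def det_submatrix_gram[OF V T])
  also have "\<dots> \<le> ?opt"
    using V by (intro SUP_upper) (simp add: feasible_indicator[OF T])
  finally have "ereal (ln ?m) - ereal \<alpha> \<le> ?opt - ereal \<alpha>"
    by (rule ereal_minus_mono) simp
  also have "\<dots> \<le> ln_det (weighted_gram V c)"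
    using opt by (simp add: alpha_optimal_def)
  finally have le: "ereal (ln ?m - \<alpha>) \<le> ln_det (weighted_gram V c)"
    by simp
  hence pos: "det (weighted_gram V c) > 0"
    by (auto simp: ln_det_def split: if_splits)
  with le have "exp (ln ?m - \<alpha>) \<le> det (weighted_gram V c)"
    by (simp add: ln_det_def ln_ge_iff)
  with True show ?thesis
    by (simp add: exp_diff exp_minus divide_inverse mult.commute)
qed

section \<open>Stirling's formula\<close>

lemma ln_one_plus_ge:
  assumes "(t::real) \<ge> 0"
  shows "t - t\<^sup>2 / 2 \<le> ln (1 + t)"
proof -
  let ?f = "\<lambda>x::real. ln (1 + x) - x + x\<^sup>2 / 2"
  have "?f 0 \<le> ?f t"
  proof (rule DERIV_nonneg_imp_increasing_open[OF assms])
    fix x :: real assume x: "0 < x" "x < t"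
    hence "DERIV ?f x :> (1 / (1 + x) - 1 + x)" "1 / (1 + x) - 1 + x \<ge> 0"
      by (auto intro!: derivative_eq_intros simp: field_simps)
    thus "\<exists>y. DERIV ?f x :> y \<and> y \<ge> 0" by blast
  qed (intro continuous_intros, auto)
  thus ?thesis by simp
qed

lemma ln_one_plus_le:
  assumes "(t::real) \<ge> 0"
  shows "ln (1 + t) \<le> t - t\<^sup>2 / 2 + t ^ 3 / 3"
proof -
  let ?f = "\<lambda>x::real. x - x\<^sup>2 / 2 + x ^ 3 / 3 - ln (1 + x)"
  have "?f 0 \<le> ?f t"
  proof (rule DERIV_nonneg_imp_increasing_open[OF assms])
    fix x :: real assume x: "0 < x" "x < t"
    hence "DERIV ?f x :> (1 - x + x\<^sup>2 - 1 / (1 + x))" "1 - x + x\<^sup>2 - 1 / (1 + x) \<ge> 0"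
      by (auto intro!: derivative_eq_intros simp: field_simps power2_eq_square)
    thus "\<exists>y. DERIV ?f x :> y \<and> y \<ge> 0" by blast
  qed (intro continuous_intros, auto)
  thus ?thesis by simp
qed

definition stirling_seq :: "nat \<Rightarrow> real" where
  "stirling_seq n = fact n * exp (real n) / (real n ^ n * sqrt (real n))"

lemma stirling_seq_pos: "n \<ge> 1 \<Longrightarrow> stirling_seq n > 0"
  by (simp add: stirling_seq_def)

lemma ln_stirling_seq:
  assumes "n \<ge> 1"
  shows "ln (stirling_seq n) = ln (fact n) + real n - real n * ln (real n) - ln (real n) / 2"
  using assms by (simp add: stirling_seq_def ln_div ln_mult ln_realpow ln_sqrt)

lemma ln_stirling_seq_diff:
  assumes "n \<ge> 1"
  shows "ln (stirling_seq n) - ln (stirling_seq (Suc n)) = (real n + 1/2) * ln (1 + 1 / real n) - 1"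
proof -
  have "1 + 1 / real n = real (Suc n) / real n"
    using assms by (simp add: field_simps)
  hence quot: "ln (1 + 1 / real n) = ln (real (Suc n)) - ln (real n)"
    using assms by (simp add: ln_div)
  have fact_Suc: "ln (fact (Suc n) :: real) = ln (real (Suc n)) + ln (fact n)"
    by (simp add: ln_mult del: of_nat_Suc)
  have Suc: "ln (stirling_seq (Suc n)) =
      ln (fact (Suc n)) + real (Suc n) - real (Suc n) * ln (real (Suc n)) - ln (real (Suc n)) / 2"
    by (rule ln_stirling_seq) simp
  show ?thesis
    unfolding ln_stirling_seq[OF assms] Suc fact_Suc quot by (simp add: algebra_simps)
qed

lemma ln_stirling_seq_diff_bound:
  assumes "n \<ge> 1"
  shows "\<bar>(real n + 1/2) * ln (1 + 1 / real n) - 1\<bar> \<le> 1 / real n ^ 2"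
proof -
  let ?t = "1 / real n"
  have n: "real n \<ge> 1"
    using assms by simp
  have "(real n + 1/2) * (?t - ?t\<^sup>2 / 2) \<le> (real n + 1/2) * ln (1 + ?t)"
    by (intro mult_left_mono ln_one_plus_ge) simp_all
  moreover have "(real n + 1/2) * ln (1 + ?t) \<le> (real n + 1/2) * (?t - ?t\<^sup>2 / 2 + ?t ^ 3 / 3)"
    by (intro mult_left_mono ln_one_plus_le) simp_all
  moreover have "(real n + 1/2) * (?t - ?t\<^sup>2 / 2) - 1 = - 1 / (4 * real n ^ 2)"
    using n by (simp add: field_simps power2_eq_square)
  moreover have "(real n + 1/2) * (?t - ?t\<^sup>2 / 2 + ?t ^ 3 / 3) - 1 =
      1 / (12 * real n ^ 2) + 1 / (6 * real n ^ 3)"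
    using n by (simp add: field_simps power2_eq_square power3_eq_cube)
  moreover have "1 / (4 * real n ^ 2) \<le> 1 / real n ^ 2"
    using n by (simp add: field_simps)
  moreover have "1 / (12 * real n ^ 2) + 1 / (6 * real n ^ 3) \<le> 1 / real n ^ 2"
  proof -
    have "1 / (6 * real n ^ 3) \<le> 1 / (6 * real n ^ 2)"
      using n by (intro divide_left_mono mult_left_mono) (auto simp: power_increasing)
    moreover have "1 / (12 * real n ^ 2) + 1 / (6 * real n ^ 2) \<le> 1 / real n ^ 2"
      using n by (simp add: field_simps)
    ultimately show ?thesis by linarith
  qed
  ultimately show ?thesis
    unfolding abs_le_iff by linarith
qed

lemma stirling_seq_convergent: "\<exists>A>0. stirling_seq \<longlonglongrightarrow> A"
proof -
  define e where "e k = ln (stirling_seq (Suc k)) - ln (stirling_seq (Suc (Suc k)))" for k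
  have "e k = (real (Suc k) + 1/2) * ln (1 + 1 / real (Suc k)) - 1" for k
    unfolding e_def by (rule ln_stirling_seq_diff) simp
  hence "norm (e k) \<le> 1 / real (Suc k) ^ 2" for k
    using ln_stirling_seq_diff_bound[of "Suc k"] by (simp only: real_norm_def)
  moreover have "summable (\<lambda>k. 1 / real (Suc k) ^ 2)"
    using inverse_power_summable[of 2, where 'a = real]
    by (subst summable_Suc_iff) (simp add: inverse_eq_divide)
  ultimately have "summable e"
    by (intro summable_comparison_test[of e "\<lambda>k. 1 / real (Suc k) ^ 2"]) auto
  have telescope: "ln (stirling_seq (Suc n)) = ln (stirling_seq 1) - (\<Sum>k<n. e k)" for n
    unfolding e_def using sum_lessThan_telescope'[of "\<lambda>k. ln (stirling_seq (Suc k))" n] by simp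
  have "(\<lambda>n. ln (stirling_seq (Suc n))) \<longlonglongrightarrow> ln (stirling_seq 1) - suminf e"
    unfolding telescope by (intro tendsto_diff tendsto_const summable_LIMSEQ \<open>summable e\<close>)
  hence "(\<lambda>n. exp (ln (stirling_seq (Suc n)))) \<longlonglongrightarrow> exp (ln (stirling_seq 1) - suminf e)"
    by (rule tendsto_exp)
  moreover have "exp (ln (stirling_seq (Suc n))) = stirling_seq (Suc n)" for n
    using stirling_seq_pos[of "Suc n"] by simp
  ultimately have "(\<lambda>n. stirling_seq (Suc n)) \<longlonglongrightarrow> exp (ln (stirling_seq 1) - suminf e)"
    by simp
  hence "stirling_seq \<longlonglongrightarrow> exp (ln (stirling_seq 1) - suminf e)"
    by (rule LIMSEQ_imp_Suc)
  thus ?thesis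
    using exp_gt_zero by blast
qed

lemma stirling_seq_sq_div_double:
  assumes "n \<ge> 1"
  shows "stirling_seq n ^ 2 / stirling_seq (2 * n) =
    fact n ^ 2 * 2 ^ (2 * n) * sqrt 2 / (fact (2 * n) * sqrt (real n))"
proof -
  have "exp (real (2 * n)) = exp (real n) ^ 2"
    by (simp add: power2_eq_square flip: exp_add)
  moreover have "real (2 * n) ^ (2 * n) = 2 ^ (2 * n) * (real n ^ n) ^ 2"
    by (simp add: power_mult_distrib mult.commute flip: power_mult)
  moreover have "sqrt (real (2 * n)) = sqrt 2 * sqrt (real n)"
    by (simp add: real_sqrt_mult)
  ultimately show ?thesis
    using assms by (simp add: stirling_seq_def field_simps power2_eq_square)
qed

lemma Gamma_series_one_half_stirling_seq:
  assumes "n \<ge> 1"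
  shows "Gamma_series (1/2 :: real) n =
    stirling_seq n ^ 2 / stirling_seq (2 * n) * (real n / (real n + 1/2)) / sqrt 2"
proof -
  have "exp (ln (real n) / 2) = sqrt (real n)"
    using assms by (simp add: ln_sqrt[symmetric])
  hence "Gamma_series (1/2 :: real) n =
      fact n * sqrt (real n) / (pochhammer (1/2) n * (1/2 + real n))"
    by (simp add: Gamma_series_def pochhammer_Suc)
  also have "pochhammer (1/2 :: real) n = fact (2 * n) / (2 ^ (2 * n) * fact n)"
    using fact_double[of n, where 'a = real] by (simp add: field_simps)
  also have "fact n * sqrt (real n) / (fact (2 * n) / (2 ^ (2 * n) * fact n) * (1/2 + real n)) =
      fact n ^ 2 * 2 ^ (2 * n) / fact (2 * n) * (real n / sqrt (real n)) / (real n + 1/2)"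
    by (simp add: real_div_sqrt field_simps power2_eq_square)
  also have "\<dots> = stirling_seq n ^ 2 / stirling_seq (2 * n) * (real n / (real n + 1/2)) / sqrt 2"
    unfolding stirling_seq_sq_div_double[OF assms] by (simp add: mult_ac)
  finally show ?thesis .
qed

lemma stirling_seq_limit: "stirling_seq \<longlonglongrightarrow> sqrt (2 * pi)"
proof -
  obtain A where A: "A > 0" "stirling_seq \<longlonglongrightarrow> A"
    using stirling_seq_convergent by blast
  have "(\<lambda>n. stirling_seq (2 * n)) \<longlonglongrightarrow> A"
    using LIMSEQ_subseq_LIMSEQ[OF A(2), of "\<lambda>n. 2 * n"] by (simp add: strict_mono_def o_def)
  moreover have "(\<lambda>n. real n / (real n + 1/2)) \<longlonglongrightarrow> 1"
  proof -
    have "(\<lambda>n. 1 / (1 + 1/2 * (1 / real n))) \<longlonglongrightarrow> 1 / (1 + 1/2 * 0)"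
      by (intro tendsto_intros lim_1_over_n) simp
    moreover have "eventually (\<lambda>n. 1 / (1 + 1/2 * (1 / real n)) = real n / (real n + 1/2)) sequentially"
      using eventually_ge_at_top[of 1] by eventually_elim (simp add: field_simps)
    ultimately show ?thesis
      using tendsto_cong by fastforce
  qed
  ultimately have "(\<lambda>n. stirling_seq n ^ 2 / stirling_seq (2 * n) * (real n / (real n + 1/2)) / sqrt 2)
      \<longlonglongrightarrow> A ^ 2 / A * 1 / sqrt 2"
    using A by (intro tendsto_intros) auto
  moreover have "eventually (\<lambda>n. stirling_seq n ^ 2 / stirling_seq (2 * n) * (real n / (real n + 1/2)) / sqrt 2
      = Gamma_series (1/2 :: real) n) sequentially"
    using eventually_ge_at_top[of 1] by eventually_elim (simp add: Gamma_series_one_half_stirling_seq)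
  ultimately have "(\<lambda>n. Gamma_series (1/2 :: real) n) \<longlonglongrightarrow> A ^ 2 / A * 1 / sqrt 2"
    by (rule Lim_transform_eventually)
  hence "A ^ 2 / A * 1 / sqrt 2 = sqrt pi"
    using LIMSEQ_unique Gamma_series_LIMSEQ[of "1/2 :: real"] Gamma_one_half_real by metis
  hence "A = sqrt (2 * pi)"
    using A(1) by (simp add: field_simps power2_eq_square real_sqrt_mult)
  thus ?thesis
    using A(2) by simp
qed

lemma fact_over_power_asymp_equiv:
  "(\<lambda>k::nat. fact k / real k ^ k) \<sim>[at_top] (\<lambda>k. sqrt (2 * pi * real k) * exp (- real k))"
proof (rule asymp_equivI')
  have "(\<lambda>k. stirling_seq k / sqrt (2 * pi)) \<longlonglongrightarrow> 1"
    using tendsto_divide[OF stirling_seq_limit tendsto_const, of "sqrt (2 * pi)"] by simp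
  moreover have "eventually (\<lambda>k. stirling_seq k / sqrt (2 * pi) =
      fact k / real k ^ k / (sqrt (2 * pi * real k) * exp (- real k))) sequentially"
    using eventually_ge_at_top[of 1]
    by eventually_elim (simp add: stirling_seq_def real_sqrt_mult exp_minus field_simps)
  ultimately show "((\<lambda>k. fact k / real k ^ k / (sqrt (2 * pi * real k) * exp (- real k))) \<longlongrightarrow> 1) at_top"
    using tendsto_cong by fastforce
qed

theorem theorem3p2:
  fixes M V :: "real mat" and n d :: nat and \<alpha> :: real and c :: "nat \<Rightarrow> real"
  assumes "M \<in> carrier_mat n n" and "psd_mat M" and "vec_space.rank n M = d"
    and "V \<in> carrier_mat d n" and "M = V\<^sup>T * V"
    and "\<alpha> \<ge> 0" and "alpha_optimal V \<alpha> c"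
  shows "expected_det M d c \<ge> fact d / real d ^ d * exp (-\<alpha>) * msd d M \<and>
    (\<lambda>k::nat. fact k / real k ^ k) \<sim>[at_top] (\<lambda>k. sqrt (2 * pi * real k) * exp (- real k))"
proof
  have "d \<le> n"
    using vec_space.rank_le_nc[OF assms(1)] assms(3) by simp
  then obtain T where T: "T \<subseteq> {0..<n}" "card T = d" and msd: "msd d M = det (submatrix M T T)"
    using msd_attained[OF assms(1)] by blast
  have "exp (-\<alpha>) * msd d M \<le> det (weighted_gram V c)"
    unfolding msd using det_weighted_gram_alpha_optimal[OF assms(4,7) T] assms(5) by simp
  hence "fact d / real d ^ d * (exp (-\<alpha>) * msd d M) \<le> fact d / real d ^ d * det (weighted_gram V c)"
    by (intro mult_left_mono) simp_all
  moreover have "expected_det M d c = fact d / real d ^ d * det (weighted_gram V c)"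
    using expected_det_gram[OF assms(4)] assms(5) by simp
  ultimately show "expected_det M d c \<ge> fact d / real d ^ d * exp (-\<alpha>) * msd d M"
    by (simp add: mult.assoc)
qed (rule fact_over_power_asymp_equiv)

end
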